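(* In Setup A, fix $\tau\in\mathcal{O}$ and for $0\le i\le l-1$ define $H_{\tau,i}:M_{p^i\tau}\to M_{p^{i+1}\tau}$ by $H_{\tau,i}=F$ if $f(p^i\tau^* )\ge f(\tau^* )$ and $H_{\tau,i}=F+V'$ if $f(p^i\tau^* )<f(\tau^* )$. Assume (a) $\dim\big(\pi_\tau\circ H_{\tau,l-1}\circ\cdots\circ H_{\tau,0}(M_\tau)\big)=f(\tau^* )$, and (b) $w_{\tau'}$ is maximal for every $\tau'\in\mathcal{O}$ with $f(\tau'^* )<f(\tau^* )$. Then: (1) $H_{\tau,i}\circ\cdots\circ H_{\tau,0}(M_\tau)=M_{p^{i+1}\tau,f(\tau^* )}$ for all $0\le i\le l-1$; (2) $w_\tau$ is maximal; (3) $w_{\tau'}$ is maximal for every $\tau'\in\mathcal{O}$ with $f(\tau'^* )=f(\tau^* )$.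
   Context: Setup A. Let $k_0=\overline{\mathbb{F}}_p$ with Frobenius $\sigma$. Let $\mathcal{O}$ be a finite set of size $l$ with a cyclic permutation $\tau'\mapsto p\tau'$ (so $\mathcal{O}=\{\tau,p\tau,\dots,p^{l-1}\tau\}$ and $p^l\tau=\tau$). Fix an integer $g\ge1$ and, for each $\tau'\in\mathcal{O}$, non-negative integers $f(\tau')$, $f(\tau'^* )$ with $f(\tau')+f(\tau'^* )=g$ (the notation $f(p^i\tau^* )$ means $f((p^i\tau)^* )$). Let $M=\bigoplus_{\tau'\in\mathcal{O}}M_{\tau'}$ where $M_{\tau'}$ has $k_0$-basis $e_{\tau',1},\dots,e_{\tau',g}$; write $M_{\tau',k}=\mathrm{Span}(e_{\tau',1},\dots,e_{\tau',k})$ and $M_{\tau',a,b}=\mathrm{Span}(e_{\tau',a},\dots,e_{\tau',b})$. For each $\tau'$ fix increasing sequences $j_{\tau',1}<\dots<j_{\tau',f(\tau')}$ and $i_{\tau',1}<\dots<i_{\tau',f(\tau'^* )}$ partitioning $\{1,\dots,g\}$, and let $w_{\tau'}\in\mathrm{Sym}_g$ be given by $w_{\tau'}(j_{\tau',k})=k$, $w_{\tau'}(i_{\tau',k})=f(\tau')+k$. Let $F:M\to M$ be the $\sigma$-semilinear map with $F(e_{\tau',j})=e_{p\tau',\,w_{\tau'}(j)-f(\tau')}$ if $w_{\tau'}(j)>f(\tau')$ and $F(e_{\tau',j})=0$ otherwise. Let $V':M\to M$ be the semilinear map with $V'(e_{\tau',j})=e_{p\tau',\,f(\tau'^* )+w_{\tau'}(j)}$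 if $w_{\tau'}(j)\le f(\tau')$ and $V'(e_{\tau',j})=0$ otherwise. Let $Q_{\tau'}=\mathrm{Span}(e_{\tau',i_{\tau',k}})$, $Q^\vee_{\tau'^*}=\mathrm{Span}(e_{\tau',j_{\tau',k}})$ (so $M_{\tau'}=Q_{\tau'}\oplus Q^\vee_{\tau'^*}$), $Q=\bigoplus Q_{\tau'}$, and $\pi_{\tau'}:M_{\tau'}\to Q_{\tau'}$ the projection with kernel $Q^\vee_{\tau'^*}$. We say $w_{\tau'}$ is maximal if $i_{\tau',k}=k$ for all $1\le k\le f(\tau'^* )$, i.e. $w_{\tau'}(k)=f(\tau')+k$ for $k\le f(\tau'^* )$ and $w_{\tau'}(k)=k-f(\tau'^* )$ for $k>f(\tau'^* )$ (equivalently $\ker F\cap M_{\tau',f(\tau'^* )}=0$; this is the permutation of maximal length). *)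

theory Defs
  imports Main "HOL-Library.Function_Algebras" "HOL-Computational_Algebra.Polynomial"
begin

text \<open>The orbit O is indexed by residues c in {0..<l}; index c stands for
  p^c tau_0, so the Frobenius action c |-> p c is c |-> (c+1) mod l.  For an index c,
  f c = f(tau') and fs c = f(tau'^*).  Each M_{tau'} is modelled as the space of
  functions nat => k supported on the basis indices {1..g}; e_j is the j-th indicator.\<close>

type_synonym 'k vect = "nat \<Rightarrow> 'k"

definition bvec :: "nat \<Rightarrow> 'k::field vect" where
  "bvec j = (\<lambda>x. if x = j then 1 else 0)"

definition scal :: "'k::field \<Rightarrow> 'k vect \<Rightarrow> 'k vect" where
  "scal a u = (\<lambda>x. a * u x)"

text \<open>M_{tau',k} = Span(e_1,...,e_k); M_{tau'} = Msub g.\<close>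
definition Msub :: "nat \<Rightarrow> 'k::field vect set" where
  "Msub k = {v. \<forall>j. (j < 1 \<or> k < j) \<longrightarrow> v j = 0}"

text \<open>The permutation w_{tau'} built from the sequences J (the j's, length fc) and
  I (the i's, length fsc).\<close>
definition wperm :: "nat \<Rightarrow> nat \<Rightarrow> (nat \<Rightarrow> nat) \<Rightarrow> (nat \<Rightarrow> nat) \<Rightarrow> nat \<Rightarrow> nat" where
  "wperm fc fsc J I j =
     (if \<exists>k\<in>{1..fc}. J k = j then (THE k. k \<in> {1..fc} \<and> J k = j)
      else fc + (THE k. k \<in> {1..fsc} \<and> I k = j))"

definition Fmap :: "('k::field \<Rightarrow> 'k) \<Rightarrow> nat \<Rightarrow> nat \<Rightarrow> nat \<Rightarrow> (nat \<Rightarrow> nat) \<Rightarrow> (nat \<Rightarrow> nat)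
                    \<Rightarrow> 'k vect \<Rightarrow> 'k vect" where
  "Fmap \<sigma> g fc fsc J I v =
     (\<Sum>j\<in>{1..g}. scal (\<sigma> (v j))
        (if fc < wperm fc fsc J I j then bvec (wperm fc fsc J I j - fc) else 0))"

definition Vmap :: "('k::field \<Rightarrow> 'k) \<Rightarrow> nat \<Rightarrow> nat \<Rightarrow> nat \<Rightarrow> (nat \<Rightarrow> nat) \<Rightarrow> (nat \<Rightarrow> nat)
                    \<Rightarrow> 'k vect \<Rightarrow> 'k vect" where
  "Vmap \<sigma> g fc fsc J I v =
     (\<Sum>j\<in>{1..g}. scal (\<sigma> (v j))
        (if wperm fc fsc J I j \<le> fc then bvec (fsc + wperm fc fsc J I j) else 0))"

definition Qproj :: "nat \<Rightarrow> (nat \<Rightarrow> nat) \<Rightarrow> 'k::field vect \<Rightarrow> 'k vect" where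
  "Qproj fsc I v = (\<lambda>j. if j \<in> I ` {1..fsc} then v j else 0)"

definition maximal :: "nat \<Rightarrow> (nat \<Rightarrow> nat) \<Rightarrow> bool" where
  "maximal fsc I \<longleftrightarrow> (\<forall>k\<in>{1..fsc}. I k = k)"

definition Hmap :: "('k::field \<Rightarrow> 'k) \<Rightarrow> nat \<Rightarrow> nat \<Rightarrow> (nat \<Rightarrow> nat) \<Rightarrow> (nat \<Rightarrow> nat)
                    \<Rightarrow> (nat \<Rightarrow> nat \<Rightarrow> nat) \<Rightarrow> (nat \<Rightarrow> nat \<Rightarrow> nat) \<Rightarrow> nat \<Rightarrow> nat
                    \<Rightarrow> 'k vect \<Rightarrow> 'k vect" where
  "Hmap \<sigma> l g f fs J I t i =
     (let c = (t + i) mod l in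
      if fs t \<le> fs c then Fmap \<sigma> g (f c) (fs c) (J c) (I c)
      else (\<lambda>v. Fmap \<sigma> g (f c) (fs c) (J c) (I c) v + Vmap \<sigma> g (f c) (fs c) (J c) (I c) v))"

fun Hcomp :: "(nat \<Rightarrow> 'a \<Rightarrow> 'a) \<Rightarrow> nat \<Rightarrow> 'a \<Rightarrow> 'a" where
  "Hcomp H 0 = H 0"
| "Hcomp H (Suc i) = H (Suc i) \<circ> Hcomp H i"

abbreviation kdim :: "'k::field vect set \<Rightarrow> nat" where
  "kdim S \<equiv> vector_space.dim (scal :: 'k \<Rightarrow> 'k vect \<Rightarrow> 'k vect) S"

end

theory Submission
  imports Defs
begin

text \<open>
  Every H_i either is F at an index with f(p^i tau^*) \<ge> f(tau^*), or, by (b), is F + V' with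
  w maximal there, which is just sigma applied coordinatewise.  F maps M_m into M_m and
  H_0 maps M onto M_{tau,f(tau^*)}, so all images lie in M_{tau,f(tau^*)}.  If w at such an index
  moved the first f(tau^*) basis vectors (for i = 0: if w_tau did), one coordinate would be lost
  for good and the projected image in (a) would have dimension < f(tau^*).  Hence all these w fix
  e_1, ..., e_{f(tau^*)}, which gives (2) and (3), and then every H_i maps M_{f(tau^*)} onto itself,
  which gives (1).
\<close>

lemma strict_mono_on_add_diff_le:
  fixes h :: "nat \<Rightarrow> nat"
  assumes mono: "strict_mono_on {1..n} h" and "1 \<le> a" "a \<le> b" "b \<le> n"
  shows "h a + (b - a) \<le> h b"
  using assms(3,4)
proof (induction b rule: dec_induct)
  case base
  then show ?case by simp
next
  case (step b)
  then have "h b < h (Suc b)"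
    using \<open>1 \<le> a\<close> by (intro strict_mono_onD[OF mono]) auto
  with step show ?case by simp
qed

lemma fun_sum_apply: "(\<Sum>a\<in>A. h a) x = (\<Sum>a\<in>A. h a x)"
  by (induct A rule: infinite_finite_induct) auto

lemma vector_space_scal: "vector_space (scal :: 'k::field \<Rightarrow> 'k vect \<Rightarrow> 'k vect)"
  by unfold_locales (auto simp: scal_def fun_eq_iff algebra_simps)

lemma kdim_le_card_support:
  fixes V :: "'k::field vect set"
  assumes A: "finite A" and V: "\<And>v x. v \<in> V \<Longrightarrow> x \<notin> A \<Longrightarrow> v x = 0"
  shows "kdim V \<le> card A"
proof -
  interpret vector_space "scal :: 'k \<Rightarrow> 'k vect \<Rightarrow> 'k vect" by (rule vector_space_scal)
  have "v \<in> span (bvec ` A)" if v: "v \<in> V" for v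
  proof -
    have "(\<Sum>j\<in>A. scal (v j) (bvec j)) x = v x" for x
      using A V[OF v, of x] unfolding fun_sum_apply scal_def bvec_def
      by (simp add: if_distrib[of "(*) _"] sum.delta' cong: if_cong)
    then have "v = (\<Sum>j\<in>A. scal (v j) (bvec j))" by auto
    also have "\<dots> \<in> span (bvec ` A)"
      by (intro span_sum span_scale span_base) auto
    finally show ?thesis .
  qed
  then have "dim V \<le> card (bvec ` A :: 'k vect set)"
    using A by (intro dim_le_card) auto
  also have "\<dots> \<le> card A" by (rule card_image_le[OF A])
  finally show ?thesis .
qed

lemma surj_power_if_roots:
  fixes n :: nat
  assumes "n > 0" and roots: "\<And>q :: 'k::field poly. degree q \<ge> 1 \<Longrightarrow> \<exists>x. poly q x = 0"
  shows "surj (\<lambda>x :: 'k. x ^ n)"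
proof (rule surjI)
  fix a :: 'k
  have "degree (monom 1 n + [:-a:]) = n"
    using \<open>n > 0\<close> by (subst degree_add_eq_left) (auto simp: degree_monom_eq)
  then obtain x where "poly (monom 1 n + [:-a:]) x = 0"
    using roots[of "monom 1 n + [:-a:]"] \<open>n > 0\<close> by auto
  then show "(SOME x. x ^ n = a) ^ n = a"
    by (intro someI[of "\<lambda>x. x ^ n = a" x]) (simp add: poly_monom)
qed

lemma Hcomp_Suc_image: "Hcomp H (Suc i) ` X = H (Suc i) ` Hcomp H i ` X"
  by (simp add: image_comp)

definition frob_coords :: "('k::field \<Rightarrow> 'k) \<Rightarrow> nat \<Rightarrow> 'k vect \<Rightarrow> 'k vect" where
  "frob_coords \<sigma> g v = (\<lambda>x. if x \<in> {1..g} then \<sigma> (v x) else 0)"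

lemma frob_coords_image_Msub:
  fixes \<sigma> :: "'k::field \<Rightarrow> 'k"
  assumes "surj \<sigma>" "\<sigma> 0 = 0" "m \<le> g"
  shows "frob_coords \<sigma> g ` Msub m = Msub m"
proof (intro subset_antisym subsetI)
  fix u :: "'k vect" assume u: "u \<in> Msub m"
  define v where "v x = (if x \<in> {1..m} then inv \<sigma> (u x) else 0)" for x
  have "frob_coords \<sigma> g v x = u x" for x
    using u assms unfolding frob_coords_def Msub_def v_def
    by (cases "x = 0") (auto simp: surj_f_inv_f)
  then have "frob_coords \<sigma> g v = u" ..
  moreover have "v \<in> Msub m" unfolding Msub_def v_def by auto
  ultimately show "u \<in> frob_coords \<sigma> g ` Msub m" by blast
qed (use assms in \<open>auto simp: frob_coords_def Msub_def\<close>)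

locale increasing_partition =
  fixes g f fs :: nat and J I :: "nat \<Rightarrow> nat"
  assumes dim_sum: "f + fs = g"
    and J_mono: "strict_mono_on {1..f} J"
    and I_mono: "strict_mono_on {1..fs} I"
    and cover: "J ` {1..f} \<union> I ` {1..fs} = {1..g}"
    and disjoint: "J ` {1..f} \<inter> I ` {1..fs} = {}"
begin

lemma I_range: "k \<in> {1..fs} \<Longrightarrow> I k \<in> {1..g}"
  using cover by blast

lemma J_range: "k \<in> {1..f} \<Longrightarrow> J k \<in> {1..g}"
  using cover by blast

lemma I_ge: "k \<in> {1..fs} \<Longrightarrow> k \<le> I k"
  using strict_mono_on_add_diff_le[OF I_mono, of 1 k] I_range[of 1] by auto

lemma maximal_if_fixes_last:
  assumes "r \<le> fs" "I r = r"
  shows "maximal r I"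
  unfolding maximal_def
proof
  fix k assume k: "k \<in> {1..r}"
  then have "I k + (r - k) \<le> I r"
    using assms by (intro strict_mono_on_add_diff_le[OF I_mono]) auto
  moreover have "k \<le> I k" using k assms by (intro I_ge) auto
  ultimately show "I k = k" using k assms by auto
qed

lemma J_if_maximal:
  assumes "maximal fs I" and k: "k \<in> {1..f}"
  shows "J k = fs + k"
proof -
  have "I ` {1..fs} = {1..fs}"
    using assms(1) unfolding maximal_def by force
  moreover have "J 1 \<in> J ` {1..f}" using k by auto
  ultimately have "fs < J 1"
    using disjoint J_range[of 1] k by fastforce
  moreover have "J 1 + (k - 1) \<le> J k" "J k + (f - k) \<le> J f"
    using k by (intro strict_mono_on_add_diff_le[OF J_mono]; simp)+
  moreover have "J f \<le> g" using J_range[of f] k by auto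
  ultimately show ?thesis using k dim_sum by auto
qed

lemma wperm_J: "k \<in> {1..f} \<Longrightarrow> wperm f fs J I (J k) = k"
  unfolding wperm_def using strict_mono_on_imp_inj_on[OF J_mono]
  by (auto intro!: the_equality dest: inj_onD)

lemma wperm_I: "k \<in> {1..fs} \<Longrightarrow> wperm f fs J I (I k) = f + k"
  unfolding wperm_def using strict_mono_on_imp_inj_on[OF I_mono] disjoint
  by (auto intro!: the_equality dest: inj_onD)

lemma sum_split:
  "(\<Sum>j\<in>{1..g}. h j) =
     (\<Sum>k\<in>{1..f}. h (J k)) + (\<Sum>k\<in>{1..fs}. (h (I k) :: 'a::comm_monoid_add))"
proof -
  have "(\<Sum>j\<in>{1..g}. h j) = (\<Sum>j\<in>J ` {1..f}. h j) + (\<Sum>j\<in>I ` {1..fs}. h j)"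
    using cover disjoint by (metis finite_atLeastAtMost finite_imageI sum.union_disjoint)
  also have "\<dots> = (\<Sum>k\<in>{1..f}. h (J k)) + (\<Sum>k\<in>{1..fs}. h (I k))"
    using strict_mono_on_imp_inj_on[OF J_mono] strict_mono_on_imp_inj_on[OF I_mono]
    by (simp add: sum.reindex)
  finally show ?thesis .
qed

lemma Fmap_apply:
  "Fmap \<sigma> g f fs J I v x = (if x \<in> {1..fs} then \<sigma> (v (I x)) else 0)"
proof -
  define T where "T j = \<sigma> (v j) *
    (if f < wperm f fs J I j then bvec (wperm f fs J I j - f) x else 0)" for j
  have "Fmap \<sigma> g f fs J I v x = (\<Sum>j\<in>{1..g}. T j)"
    unfolding Fmap_def fun_sum_apply T_def by (intro sum.cong) (auto simp: scal_def)
  also have "\<dots> = (\<Sum>k\<in>{1..f}. T (J k)) + (\<Sum>k\<in>{1..fs}. T (I k))"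
    by (rule sum_split)
  also have "(\<Sum>k\<in>{1..f}. T (J k)) = 0"
    by (rule sum.neutral) (auto simp: wperm_J T_def)
  also have "(\<Sum>k\<in>{1..fs}. T (I k)) = (\<Sum>k\<in>{1..fs}. if k = x then \<sigma> (v (I k)) else 0)"
    by (rule sum.cong) (auto simp: wperm_I T_def bvec_def)
  finally show ?thesis by (simp add: sum.delta)
qed

lemma Vmap_apply:
  "Vmap \<sigma> g f fs J I v x =
     (if fs < x \<and> x - fs \<in> {1..f} then \<sigma> (v (J (x - fs))) else 0)"
proof -
  define T where "T j = \<sigma> (v j) *
    (if wperm f fs J I j \<le> f then bvec (fs + wperm f fs J I j) x else 0)" for j
  have "Vmap \<sigma> g f fs J I v x = (\<Sum>j\<in>{1..g}. T j)"
    unfolding Vmap_def fun_sum_apply T_def by (intro sum.cong) (auto simp: scal_def)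
  also have "\<dots> = (\<Sum>k\<in>{1..f}. T (J k)) + (\<Sum>k\<in>{1..fs}. T (I k))"
    by (rule sum_split)
  also have "(\<Sum>k\<in>{1..fs}. T (I k)) = 0"
    by (rule sum.neutral) (auto simp: wperm_I T_def)
  also have "(\<Sum>k\<in>{1..f}. T (J k)) =
      (\<Sum>k\<in>{1..f}. if k = x - fs then (if fs < x then \<sigma> (v (J k)) else 0) else 0)"
    by (rule sum.cong) (auto simp: wperm_J T_def bvec_def)
  finally show ?thesis by (simp add: sum.delta)
qed

lemma Fmap_Msub_fs: "Fmap \<sigma> g f fs J I v \<in> Msub fs"
  unfolding Msub_def by (auto simp: Fmap_apply)

lemma Fmap_Msub:
  assumes "\<sigma> 0 = 0" and v: "v \<in> Msub m"
  shows "Fmap \<sigma> g f fs J I v \<in> Msub m"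
proof -
  have "v (I x) = 0" if "x \<in> {1..fs}" "m < x" for x
    using v I_ge[OF that(1)] that(2) unfolding Msub_def by auto
  then show ?thesis
    using assms unfolding Msub_def by (auto simp: Fmap_apply)
qed

lemma Fmap_Msub_pred:
  assumes "\<sigma> 0 = 0" and r: "r \<in> {1..fs}" "I r \<noteq> r" and v: "v \<in> Msub r"
  shows "Fmap \<sigma> g f fs J I v \<in> Msub (r - 1)"
proof -
  have "r < I r" using I_ge[OF r(1)] r(2) by simp
  then have "Fmap \<sigma> g f fs J I v r = 0"
    using assms unfolding Msub_def by (simp add: Fmap_apply)
  moreover have "Fmap \<sigma> g f fs J I v \<in> Msub r" using Fmap_Msub assms by blast
  ultimately show ?thesis
    unfolding Msub_def
  proof (intro CollectI allI impI)
    fix j assume "j < 1 \<or> r - 1 < j"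
    then have "j = r \<or> j < 1 \<or> r < j" using r by auto
    then show "Fmap \<sigma> g f fs J I v j = 0"
      using \<open>Fmap \<sigma> g f fs J I v r = 0\<close> \<open>Fmap \<sigma> g f fs J I v \<in> Msub r\<close>
      unfolding Msub_def by blast
  qed
qed

lemma Fmap_preimage:
  fixes \<sigma> :: "'k::field \<Rightarrow> 'k" and u :: "'k vect"
  assumes surj: "surj \<sigma>" and "\<sigma> 0 = 0" and m: "m \<le> fs" and u: "u \<in> Msub m"
  obtains v where "\<And>y. y \<notin> I ` {1..m} \<Longrightarrow> v y = 0" "Fmap \<sigma> g f fs J I v = u"
proof
  define v where
    "v y = (if y \<in> I ` {1..m} then inv \<sigma> (u (inv_into {1..m} I y)) else 0)" for y
  show "\<And>y. y \<notin> I ` {1..m} \<Longrightarrow> v y = 0" by (simp add: v_def)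
  have inj: "inj_on I {1..fs}" by (rule strict_mono_on_imp_inj_on[OF I_mono])
  have "Fmap \<sigma> g f fs J I v x = u x" for x
  proof (cases "x \<in> {1..m}")
    case True
    moreover have "inj_on I {1..m}" using m by (intro inj_on_subset[OF inj]) auto
    ultimately have "inv_into {1..m} I (I x) = x" by (rule inv_into_f_f[rotated])
    with True m show ?thesis by (simp add: Fmap_apply v_def surj_f_inv_f[OF surj])
  next
    case False
    have "I x \<notin> I ` {1..m}" if "x \<in> {1..fs}"
      using False that m inj by (auto dest: inj_onD)
    with False u assms show ?thesis
      unfolding Msub_def by (cases "x = 0") (auto simp: Fmap_apply v_def)
  qed
  then show "Fmap \<sigma> g f fs J I v = u" ..
qed

lemma Fmap_image_Msub:
  fixes \<sigma> :: "'k::field \<Rightarrow> 'k"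
  assumes "surj \<sigma>" "\<sigma> 0 = 0"
  shows "Fmap \<sigma> g f fs J I ` Msub g = Msub fs"
proof (intro subset_antisym subsetI)
  fix u :: "'k vect" assume "u \<in> Msub fs"
  then obtain v where v: "\<And>y. y \<notin> I ` {1..fs} \<Longrightarrow> v y = 0" "Fmap \<sigma> g f fs J I v = u"
    using Fmap_preimage assms by blast
  have "y \<notin> I ` {1..fs}" if "y < 1 \<or> g < y" for y
    using I_range that by fastforce
  with v(1) have "v \<in> Msub g" unfolding Msub_def by blast
  with v(2) show "u \<in> Fmap \<sigma> g f fs J I ` Msub g" by blast
qed (auto intro: Fmap_Msub_fs)

lemma Fmap_image_Msub_maximal:
  fixes \<sigma> :: "'k::field \<Rightarrow> 'k"
  assumes "surj \<sigma>" "\<sigma> 0 = 0" "m \<le> fs" "maximal m I"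
  shows "Fmap \<sigma> g f fs J I ` Msub m = Msub m"
proof (intro subset_antisym subsetI)
  fix u :: "'k vect" assume "u \<in> Msub m"
  then obtain v where v: "\<And>y. y \<notin> I ` {1..m} \<Longrightarrow> v y = 0" "Fmap \<sigma> g f fs J I v = u"
    using Fmap_preimage assms by blast
  have "I ` {1..m} = {1..m}"
    using assms(4) unfolding maximal_def by force
  with v(1) have "v \<in> Msub m" unfolding Msub_def by auto
  with v(2) show "u \<in> Fmap \<sigma> g f fs J I ` Msub m" by blast
qed (auto intro: Fmap_Msub assms)

lemma Fmap_plus_Vmap_maximal:
  assumes "maximal fs I"
  shows "Fmap \<sigma> g f fs J I v + Vmap \<sigma> g f fs J I v = frob_coords \<sigma> g v"
proof
  fix x
  consider "x \<in> {1..fs}" | "fs < x" "x \<le> g" | "x \<notin> {1..g}"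
    using dim_sum by fastforce
  then show "(Fmap \<sigma> g f fs J I v + Vmap \<sigma> g f fs J I v) x = frob_coords \<sigma> g v x"
  proof cases
    case 1
    then have "I x = x" using assms unfolding maximal_def by blast
    with 1 dim_sum show ?thesis by (simp add: Fmap_apply Vmap_apply frob_coords_def)
  next
    case 2
    then have "x - fs \<in> {1..f}" using dim_sum by auto
    with 2 have "J (x - fs) = x" using J_if_maximal[OF assms] by simp
    with 2 \<open>x - fs \<in> {1..f}\<close> show ?thesis by (simp add: Fmap_apply Vmap_apply frob_coords_def)
  next
    case 3
    then have "x \<notin> {1..fs}" "\<not> (fs < x \<and> x - fs \<in> {1..f})" using dim_sum by auto
    with 3 show ?thesis by (auto simp: Fmap_apply Vmap_apply frob_coords_def)
  qed
qed

end

locale orbit_data =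
  fixes \<sigma> :: "'k::field \<Rightarrow> 'k" and l g t :: nat and f fs :: "nat \<Rightarrow> nat"
    and J I :: "nat \<Rightarrow> nat \<Rightarrow> nat"
  assumes sigma_surj: "surj \<sigma>" and sigma_zero: "\<sigma> 0 = 0"
    and t_less: "t < l"
    and partition: "\<And>c. c < l \<Longrightarrow> increasing_partition g (f c) (fs c) (J c) (I c)"
    and maximal_below: "\<And>c. c < l \<Longrightarrow> fs c < fs t \<Longrightarrow> maximal (fs c) (I c)"
begin

abbreviation orb :: "nat \<Rightarrow> nat" where
  "orb i \<equiv> (t + i) mod l"

abbreviation H :: "nat \<Rightarrow> 'k vect \<Rightarrow> 'k vect" where
  "H \<equiv> Hmap \<sigma> l g f fs J I t"

lemma orb_less: "orb i < l"
  using t_less by simp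

lemma orb_0: "orb 0 = t"
  using t_less by simp

lemma orb_surj: "c < l \<Longrightarrow> \<exists>i<l. orb i = c"
  using t_less by (intro exI[of _ "(c + l - t) mod l"]) (simp add: mod_add_right_eq)

lemma partition_orb: "increasing_partition g (f (orb i)) (fs (orb i)) (J (orb i)) (I (orb i))"
  using partition orb_less .

lemma fs_t_le_g: "fs t \<le> g"
  using increasing_partition.dim_sum[OF partition[OF t_less]] by simp

lemma H_eq_Fmap:
  "fs t \<le> fs (orb i) \<Longrightarrow> H i = Fmap \<sigma> g (f (orb i)) (fs (orb i)) (J (orb i)) (I (orb i))"
  by (simp add: Hmap_def Let_def)

lemma H_eq_frob_coords: "fs (orb i) < fs t \<Longrightarrow> H i = frob_coords \<sigma> g"
  using increasing_partition.Fmap_plus_Vmap_maximal[OF partition_orb[of i]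
      maximal_below[OF orb_less]]
  by (auto simp: Hmap_def Let_def fun_eq_iff plus_fun_def)

lemma H_Msub:
  assumes "v \<in> Msub m"
  shows "H i v \<in> Msub m"
proof (cases "fs t \<le> fs (orb i)")
  case True
  then show ?thesis
    using increasing_partition.Fmap_Msub[where \<sigma> = \<sigma>, OF partition_orb[of i] sigma_zero assms]
    by (simp add: H_eq_Fmap)
next
  case False
  then show ?thesis
    using assms sigma_zero by (simp add: H_eq_frob_coords frob_coords_def Msub_def)
qed

lemma Hcomp_image_0: "Hcomp H 0 ` Msub g = Msub (fs t)"
  using increasing_partition.Fmap_image_Msub[where \<sigma> = \<sigma>,
      OF partition[OF t_less] sigma_surj sigma_zero]
  by (simp add: H_eq_Fmap[of 0, unfolded orb_0])

lemma Hcomp_image_Msub_mono: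
  assumes "Hcomp H i\<^sub>0 ` Msub g \<subseteq> Msub m" "i\<^sub>0 \<le> i"
  shows "Hcomp H i ` Msub g \<subseteq> Msub m"
  using assms(2,1)
proof (induction i rule: dec_induct)
  case (step i)
  then show ?case using H_Msub by (auto simp: Hcomp_Suc_image)
qed simp

lemma Hcomp_image_subset: "Hcomp H i ` Msub g \<subseteq> Msub (fs t)"
  using Hcomp_image_Msub_mono[of 0] Hcomp_image_0 by simp

end

locale orbit_data_dim = orbit_data +
  assumes proj_dim:
    "kdim (Qproj (fs t) (I t) ` Hcomp (Hmap \<sigma> l g f fs J I t) (l - 1) ` Msub g) = fs t"
begin

lemma fs_t_le_if_Hcomp_image_Msub:
  assumes "Hcomp H (l - 1) ` Msub g \<subseteq> Msub m"
  shows "fs t \<le> m"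
proof -
  have "fs t = kdim (Qproj (fs t) (I t) ` Hcomp H (l - 1) ` Msub g)"
    using proj_dim ..
  also have "\<dots> \<le> card {1..m}"
  proof (rule kdim_le_card_support)
    fix w x assume w: "w \<in> Qproj (fs t) (I t) ` Hcomp H (l - 1) ` Msub g"
      and x: "x \<notin> {1..m}"
    from w obtain v where v: "v \<in> Msub m" "w = Qproj (fs t) (I t) v"
      using assms by blast
    from x have "x < 1 \<or> m < x" by auto
    with v(1) have "v x = 0" unfolding Msub_def by blast
    with v(2) show "w x = 0" by (simp add: Qproj_def)
  qed simp
  finally show ?thesis by simp
qed

text \<open>If i_{tau,f(tau^*)} > f(tau^*), that coordinate of Q_tau meets only zero entries of the
  final image, so the projection in (a) has dimension < f(tau^*).\<close>

lemma maximal_at_t: "maximal (fs t) (I t)"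
proof (rule ccontr)
  assume not_maximal: "\<not> maximal (fs t) (I t)"
  interpret P: increasing_partition g "f t" "fs t" "J t" "I t"
    using partition t_less .
  have pos: "1 \<le> fs t" using not_maximal unfolding maximal_def by auto
  have "I t (fs t) \<noteq> fs t" using P.maximal_if_fixes_last not_maximal by blast
  with pos have last_moved: "fs t < I t (fs t)" using P.I_ge[of "fs t"] by simp
  have "fs t = kdim (Qproj (fs t) (I t) ` Hcomp H (l - 1) ` Msub g)"
    using proj_dim ..
  also have "\<dots> \<le> card (I t ` {1..fs t - 1})"
  proof (rule kdim_le_card_support)
    fix w x assume w: "w \<in> Qproj (fs t) (I t) ` Hcomp H (l - 1) ` Msub g"
      and x: "x \<notin> I t ` {1..fs t - 1}"
    then obtain v where v: "v \<in> Msub (fs t)" "w = Qproj (fs t) (I t) v"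
      using Hcomp_image_subset by blast
    have "v x = 0" if x_in: "x \<in> I t ` {1..fs t}"
    proof -
      obtain k where k: "k \<in> {1..fs t}" "x = I t k" using x_in by blast
      with x have "k = fs t" by (cases "k = fs t") auto
      with k have "x = I t (fs t)" by simp
      then show ?thesis using v(1) last_moved unfolding Msub_def by simp
    qed
    then show "w x = 0" using v(2) unfolding Qproj_def by simp
  qed simp
  also have "\<dots> \<le> fs t - 1"
    using card_image_le[of "{1..fs t - 1}" "I t"] by simp
  finally show False using pos by simp
qed

text \<open>Otherwise H_i would push the image into M_{f(tau^*) - 1}, which no later H_j leaves.\<close>

lemma maximal_along_orbit:
  assumes "0 < i" "i < l" and le: "fs t \<le> fs (orb i)"
  shows "maximal (fs t) (I (orb i))"
proof (rule ccontr)
  assume not_maximal: "\<not> maximal (fs t) (I (orb i))"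
  interpret P: increasing_partition g "f (orb i)" "fs (orb i)" "J (orb i)" "I (orb i)"
    by (rule partition_orb)
  have pos: "1 \<le> fs t" using not_maximal unfolding maximal_def by auto
  have moved: "I (orb i) (fs t) \<noteq> fs t" using P.maximal_if_fixes_last not_maximal le by blast
  obtain j where i: "i = Suc j" using \<open>0 < i\<close> gr0_implies_Suc by blast
  have "Hcomp H i ` Msub g \<subseteq> H i ` Msub (fs t)"
    using Hcomp_image_subset[of j] by (auto simp: i Hcomp_Suc_image)
  also have "\<dots> \<subseteq> Msub (fs t - 1)"
    using P.Fmap_Msub_pred[where \<sigma> = \<sigma>, OF sigma_zero _ moved] pos le
    by (auto simp: H_eq_Fmap[OF le])
  finally have "Hcomp H (l - 1) ` Msub g \<subseteq> Msub (fs t - 1)"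
    using Hcomp_image_Msub_mono \<open>i < l\<close> by simp
  then have "fs t \<le> fs t - 1" by (rule fs_t_le_if_Hcomp_image_Msub)
  with pos show False by simp
qed

lemma maximal_on_orbit:
  assumes "i < l" "fs t \<le> fs (orb i)"
  shows "maximal (fs t) (I (orb i))"
  using maximal_at_t maximal_along_orbit[OF _ assms] orb_0 by (cases "i = 0") auto

lemma H_image_Msub: "i < l \<Longrightarrow> H i ` Msub (fs t) = Msub (fs t)"
  using increasing_partition.Fmap_image_Msub_maximal[where \<sigma> = \<sigma>,
      OF partition_orb[of i] sigma_surj sigma_zero _ maximal_on_orbit]
    frob_coords_image_Msub[OF sigma_surj sigma_zero fs_t_le_g]
  by (cases "fs t \<le> fs (orb i)") (auto simp: H_eq_Fmap H_eq_frob_coords)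

lemma Hcomp_image: "i < l \<Longrightarrow> Hcomp H i ` Msub g = Msub (fs t)"
proof (induction i)
  case 0
  show ?case by (rule Hcomp_image_0)
next
  case (Suc i)
  then show ?case unfolding Hcomp_Suc_image by (simp add: H_image_Msub)
qed

lemma maximal_if_fs_eq:
  assumes "c < l" "fs c = fs t"
  shows "maximal (fs c) (I c)"
proof -
  obtain i where "i < l" "orb i = c" using orb_surj[OF \<open>c < l\<close>] by blast
  then show ?thesis using maximal_on_orbit assms(2) by force
qed

end

theorem proposition4p5:
  fixes p :: nat and \<sigma> :: "'k::field \<Rightarrow> 'k"
    and l g t :: nat and f fs :: "nat \<Rightarrow> nat" and J I :: "nat \<Rightarrow> nat \<Rightarrow> nat"
  assumes prime_p: "prime p"
    and char_k: "CHAR('k) = p"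
    and alg_closed: "\<And>q :: 'k poly. degree q \<ge> 1 \<Longrightarrow> \<exists>x. poly q x = 0"
    and alg_over_Fp: "\<And>x :: 'k. \<exists>n\<ge>1. x ^ (p ^ n) = x"
    and frob: "\<sigma> = (\<lambda>x. x ^ p)"
    and g_pos: "g \<ge> 1"
    and t_in: "t < l"
    and f_sum: "\<And>c. c < l \<Longrightarrow> f c + fs c = g"
    and J_mono: "\<And>c. c < l \<Longrightarrow> strict_mono_on {1..f c} (J c)"
    and I_mono: "\<And>c. c < l \<Longrightarrow> strict_mono_on {1..fs c} (I c)"
    and JI_cover: "\<And>c. c < l \<Longrightarrow> J c ` {1..f c} \<union> I c ` {1..fs c} = {1..g}"
    and JI_disj: "\<And>c. c < l \<Longrightarrow> J c ` {1..f c} \<inter> I c ` {1..fs c} = {}"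
    and hyp_a: "kdim (Qproj (fs t) (I t) `
                  (Hcomp (Hmap \<sigma> l g f fs J I t) (l - 1) ` (Msub g :: 'k vect set))) = fs t"
    and hyp_b: "\<And>c. c < l \<Longrightarrow> fs c < fs t \<Longrightarrow> maximal (fs c) (I c)"
  shows "(\<forall>i<l. Hcomp (Hmap \<sigma> l g f fs J I t) i ` (Msub g :: 'k vect set) = Msub (fs t))
         \<and> maximal (fs t) (I t)
         \<and> (\<forall>c<l. fs c = fs t \<longrightarrow> maximal (fs c) (I c))"
proof -
  have "surj \<sigma>"
    using frob surj_power_if_roots[OF prime_gt_0_nat[OF prime_p] alg_closed] by simp
  moreover have "\<sigma> 0 = 0"
    using frob prime_gt_0_nat[OF prime_p] by simp
  moreover have "increasing_partition g (f c) (fs c) (J c) (I c)" if "c < l" for c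
    using that f_sum J_mono I_mono JI_cover JI_disj by unfold_locales
  ultimately interpret orbit_data_dim \<sigma> l g t f fs J I
    using t_in hyp_a hyp_b
    by (simp add: orbit_data_dim_def orbit_data_def orbit_data_dim_axioms_def)
  show ?thesis
    using Hcomp_image maximal_at_t maximal_if_fs_eq by blast
qed

end
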